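(* Let $n\ge 3$ and let $\sigma$ be a maximal simplex of $\mathcal{VR}(\mathbb{I}_n;2)$. Then one of the following holds: (i) $\sigma = N[v]$ for some $v\in V(\mathbb{I}_n)$; (ii) $\sigma=\{v,v^{i_0},v^{j_0},v^{i_0,j_0}\}$ for some $v\in V(\mathbb{I}_n)$ and distinct $i_0,j_0\in[n]$; (iii) $\sigma = K_v^{i_0,j_0,k_0}$ for some $v\in V(\mathbb{I}_n)$ and distinct $i_0,j_0,k_0\in[n]$.
   Context: $\mathbb{I}_n$ is the $n$-dimensional hypercube graph on vertex set $\{0,1\}^n$ (adjacent iff differing in exactly one coordinate), with Hamming distance $d(v,w)=\#\{i: v(i)\ne w(i)\}$, where $v(i)$ is the $i$-th coordinate. $\mathcal{VR}(X;r)$ is the simplicial complex of finite subsets of the metric space $X$ of diameter at most $r$. $[n]=\{1,\dots,n\}$. For a vertex $v$ and distinct $i_1,\dots,i_k\in[n]$, $v^{i_1,\dots,i_k}$ is the vertex obtained from $v$ by changing coordinates $i_1,\dots,i_k$ (and only those). $N(v)=\{v^i:i\in[n]\}$ and $N[v]=N(v)\cup\{v\}$. For distinct $i,j,k\in[n]$, $K_v^{i,j,k}=\{v,v^{i,j},v^{j,k},v^{i,k}\}$. *)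

theory Defs
  imports Main "HOL-Library.FuncSet"
begin

definition cube_vertices :: "nat \<Rightarrow> (nat \<Rightarrow> bool) set" where
  "cube_vertices n = {1..n} \<rightarrow>\<^sub>E (UNIV :: bool set)"

definition hamming :: "nat \<Rightarrow> (nat \<Rightarrow> bool) \<Rightarrow> (nat \<Rightarrow> bool) \<Rightarrow> nat" where
  "hamming n v w = card {i \<in> {1..n}. v i \<noteq> w i}"

definition VR :: "'a set \<Rightarrow> ('a \<Rightarrow> 'a \<Rightarrow> 'b::linorder) \<Rightarrow> 'b \<Rightarrow> 'a set set" where
  "VR X d r = {\<sigma>. finite \<sigma> \<and> \<sigma> \<noteq> {} \<and> \<sigma> \<subseteq> X \<and> (\<forall>x\<in>\<sigma>. \<forall>y\<in>\<sigma>. d x y \<le> r)}"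

definition maximal_simplex :: "'a set set \<Rightarrow> 'a set \<Rightarrow> bool" where
  "maximal_simplex K \<sigma> \<longleftrightarrow> \<sigma> \<in> K \<and> (\<forall>\<tau>\<in>K. \<sigma> \<subseteq> \<tau> \<longrightarrow> \<tau> = \<sigma>)"

definition flip :: "(nat \<Rightarrow> bool) \<Rightarrow> nat set \<Rightarrow> (nat \<Rightarrow> bool)" where
  "flip v S = (\<lambda>i. if i \<in> S then \<not> v i else v i)"

definition closed_nbhd :: "nat \<Rightarrow> (nat \<Rightarrow> bool) \<Rightarrow> (nat \<Rightarrow> bool) set" where
  "closed_nbhd n v = insert v {flip v {i} | i. i \<in> {1..n}}"

definition Kv :: "(nat \<Rightarrow> bool) \<Rightarrow> nat \<Rightarrow> nat \<Rightarrow> nat \<Rightarrow> (nat \<Rightarrow> bool) set" where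
  "Kv v i j k = {v, flip v {i, j}, flip v {j, k}, flip v {i, k}}"

end

theory Submission
  imports Defs
begin

text \<open>Fix a vertex \<open>v\<close> of \<open>\<sigma>\<close> and describe every vertex \<open>w\<close> by the set of coordinates
in which it differs from \<open>v\<close>, i.e. \<open>w = flip v A\<close>. Then \<open>\<sigma>\<close> becomes a family of sets
containing \<open>{}\<close> whose symmetric differences have at most two elements; in particular
its members have at most two elements, a singleton lies in every pair of the family, and
any two pairs intersect. A pairwise intersecting family of pairs is a star or a triangle,
and a short case analysis shows that the family lies within distance one of a set \<open>C\<close>
with at most one element (so \<open>\<sigma>\<close> lies in the closed neighbourhood of \<open>flip v C\<close>), or
inside the power set of a pair (a square), or is \<open>{{}, {a,b}, {b,c}, {a,c}}\<close>
(giving \<open>Kv v a b c\<close>). Maximality turns the first two inclusions into equalities. The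
classification holds for every \<open>n\<close>.\<close>

lemma card_2_eq_doubleton:
  assumes "card P = 2" "a \<in> P" "b \<in> P" "a \<noteq> b"
  shows "P = {a, b}"
proof -
  have "finite P" using assms(1) by (intro card_ge_0_finite) simp
  then show ?thesis using assms by (intro card_subset_eq[symmetric]) auto
qed

lemma two_set_meeting_triangle:
  assumes "card P = 2" "a \<noteq> b" "b \<noteq> c" "a \<noteq> c"
    and "P \<inter> {a, b} \<noteq> {}" "P \<inter> {b, c} \<noteq> {}" "P \<inter> {a, c} \<noteq> {}"
  shows "P \<in> {{a, b}, {b, c}, {a, c}}"
proof -
  have "a \<in> P \<and> b \<in> P \<or> b \<in> P \<and> c \<in> P \<or> a \<in> P \<and> c \<in> P" using assms(5-7) by blast
  then show ?thesis using card_2_eq_doubleton[OF assms(1)] assms(2-4) by blast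
qed

lemma intersecting_two_sets_star_or_triangle:
  assumes two: "\<And>P. P \<in> \<P> \<Longrightarrow> card P = 2"
    and meet: "\<And>P Q. P \<in> \<P> \<Longrightarrow> Q \<in> \<P> \<Longrightarrow> P \<inter> Q \<noteq> {}"
  shows "(\<exists>c. \<forall>P\<in>\<P>. c \<in> P) \<or> (\<exists>a b c. a \<noteq> b \<and> b \<noteq> c \<and> a \<noteq> c \<and> \<P> = {{a, b}, {b, c}, {a, c}})"
proof (cases "\<exists>c. \<forall>P\<in>\<P>. c \<in> P")
  case no_star: False
  then obtain P0 where "P0 \<in> \<P>" by blast
  moreover obtain a b where "P0 = {a, b}" "a \<noteq> b"
    using two[OF \<open>P0 \<in> \<P>\<close>] by (auto simp: card_2_iff)
  ultimately have ab: "{a, b} \<in> \<P>" "a \<noteq> b" by simp_all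
  obtain P1 where P1: "P1 \<in> \<P>" "a \<notin> P1" using no_star by blast
  have "b \<in> P1" using meet[OF ab(1) P1(1)] P1(2) by blast
  moreover obtain c where "c \<in> P1" "c \<noteq> b"
    using two[OF P1(1)] by (auto simp: card_2_iff)
  ultimately have bc: "{b, c} \<in> \<P>" "c \<noteq> a" "c \<noteq> b"
    using card_2_eq_doubleton[OF two[OF P1(1)]] P1 by auto
  obtain P2 where P2: "P2 \<in> \<P>" "b \<notin> P2" using no_star by blast
  have "a \<in> P2" "c \<in> P2" using meet[OF ab(1) P2(1)] meet[OF bc(1) P2(1)] P2(2) by blast+
  then have ac: "{a, c} \<in> \<P>"
    using card_2_eq_doubleton[OF two[OF P2(1)]] P2(1) bc(2) by metis
  have "\<P> \<subseteq> {{a, b}, {b, c}, {a, c}}"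
  proof
    fix P assume "P \<in> \<P>"
    then show "P \<in> {{a, b}, {b, c}, {a, c}}"
      using two_set_meeting_triangle[OF two ab(2) bc(3)[symmetric] bc(2)[symmetric]]
        meet[OF \<open>P \<in> \<P>\<close> ab(1)] meet[OF \<open>P \<in> \<P>\<close> bc(1)] meet[OF \<open>P \<in> \<P>\<close> ac]
      by simp
  qed
  moreover have "{{a, b}, {b, c}, {a, c}} \<subseteq> \<P>" using ab bc ac by simp
  ultimately have "\<P> = {{a, b}, {b, c}, {a, c}}" by (rule subset_antisym)
  then show ?thesis using ab(2) bc(2,3) by auto
qed simp

lemma card_sym_diff_le:
  assumes "finite A" "finite B"
  shows "card (sym_diff A B) \<le> card A + card B"
proof -
  have "card (sym_diff A B) \<le> card (A \<union> B)" by (rule card_mono) (use assms in auto)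
  then show ?thesis using card_Un_le[of A B] by linarith
qed

context
  fixes \<A> :: "'a set set"
  assumes empty_mem: "{} \<in> \<A>"
    and finite_mem: "\<And>A. A \<in> \<A> \<Longrightarrow> finite A"
    and sym_diff_le_2: "\<And>A B. A \<in> \<A> \<Longrightarrow> B \<in> \<A> \<Longrightarrow> card (sym_diff A B) \<le> 2"
begin

lemma card_mem_le_2:
  assumes "A \<in> \<A>"
  shows "card A \<le> 2"
  using sym_diff_le_2[OF assms empty_mem] by simp

lemma singleton_mem_in_pair_mem:
  assumes "{a} \<in> \<A>" "P \<in> \<A>" "card P = 2"
  shows "a \<in> P"
proof (rule ccontr)
  assume "a \<notin> P"
  then have "sym_diff {a} P = insert a P" by auto
  then show False
    using sym_diff_le_2[OF assms(1,2)] assms(3) \<open>a \<notin> P\<close> finite_mem[OF assms(2)] by simp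
qed

lemma pair_mems_intersect:
  assumes "P \<in> \<A>" "Q \<in> \<A>" "card P = 2" "card Q = 2"
  shows "P \<inter> Q \<noteq> {}"
proof
  assume disj: "P \<inter> Q = {}"
  then have "sym_diff P Q = P \<union> Q" by auto
  then show False
    using sym_diff_le_2[OF assms(1,2)] assms(3,4) disj finite_mem[OF assms(1)] finite_mem[OF assms(2)]
    by (simp add: card_Un_disjoint)
qed

lemma card_sym_diff_singleton_le_1:
  assumes "A \<in> \<A>" "A = {} \<or> c \<in> A"
  shows "card (sym_diff A {c}) \<le> 1"
proof (cases "A = {}")
  case False
  then have "sym_diff A {c} = A - {c}" "c \<in> A" using assms(2) by auto
  then show ?thesis using card_mem_le_2[OF assms(1)] finite_mem[OF assms(1)] by simp
qed simp

lemma mem_card_cases: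
  assumes "A \<in> \<A>"
  obtains "A = {}" | x where "A = {x}" | "card A = 2"
proof -
  have "card A = 0 \<or> card A = 1 \<or> card A = 2" using card_mem_le_2[OF assms] by linarith
  then show ?thesis using that finite_mem[OF assms] by (auto simp: card_1_singleton_iff)
qed

lemma near_singleton_or_square_if_singleton_mem:
  assumes a: "{a} \<in> \<A>" and P: "P \<in> \<A>" "card P = 2"
  shows "(\<forall>A\<in>\<A>. card (sym_diff A {a}) \<le> 1) \<or> (\<exists>a'. a' \<noteq> a \<and> {a'} \<in> \<A> \<and> \<A> \<subseteq> Pow {a, a'})"
proof (cases "\<exists>a'. {a'} \<in> \<A> \<and> a' \<noteq> a")
  case False
  have "A = {} \<or> a \<in> A" if "A \<in> \<A>" for A
    using that by (cases rule: mem_card_cases) (use that False singleton_mem_in_pair_mem[OF a] in auto)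
  then show ?thesis using card_sym_diff_singleton_le_1 by blast
next
  case True
  then obtain a' where a': "{a'} \<in> \<A>" "a' \<noteq> a" by blast
  have pair: "Q = {a, a'}" if "Q \<in> \<A>" "card Q = 2" for Q
    using card_2_eq_doubleton[OF that(2)] singleton_mem_in_pair_mem[OF a that]
      singleton_mem_in_pair_mem[OF a'(1) that] a'(2) by simp
  have "A \<subseteq> {a, a'}" if "A \<in> \<A>" for A
    using that
    by (cases rule: mem_card_cases) (use that pair[OF P] singleton_mem_in_pair_mem[OF _ P] pair in auto)
  then show ?thesis using a' by blast
qed

lemma near_singleton_or_triangle_if_no_singleton_mem:
  assumes no_singleton: "\<And>a. {a} \<notin> \<A>" and P: "P \<in> \<A>" "card P = 2"
  shows "(\<exists>c\<in>\<Union>\<A>. \<forall>A\<in>\<A>. card (sym_diff A {c}) \<le> 1)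
    \<or> (\<exists>a b c. a \<noteq> b \<and> b \<noteq> c \<and> a \<noteq> c \<and> \<A> = {{}, {a, b}, {b, c}, {a, c}})"
proof -
  define \<P> where "\<P> = {Q \<in> \<A>. card Q = 2}"
  have \<A>_eq: "\<A> = insert {} \<P>"
  proof
    show "\<A> \<subseteq> insert {} \<P>"
      using mem_card_cases no_singleton unfolding \<P>_def by blast
  qed (use empty_mem \<P>_def in auto)
  have "(\<exists>c. \<forall>Q\<in>\<P>. c \<in> Q) \<or> (\<exists>a b c. a \<noteq> b \<and> b \<noteq> c \<and> a \<noteq> c \<and> \<P> = {{a, b}, {b, c}, {a, c}})"
    by (rule intersecting_two_sets_star_or_triangle) (auto simp: \<P>_def pair_mems_intersect)
  then show ?thesis
  proof (elim disjE exE conjE)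
    fix c assume star: "\<forall>Q\<in>\<P>. c \<in> Q"
    then have "\<forall>A\<in>\<A>. card (sym_diff A {c}) \<le> 1"
      using card_sym_diff_singleton_le_1 \<A>_eq by blast
    moreover have "c \<in> \<Union>\<A>" using star P unfolding \<P>_def by blast
    ultimately show ?thesis by blast
  next
    fix a b c assume "a \<noteq> b" "b \<noteq> c" "a \<noteq> c" "\<P> = {{a, b}, {b, c}, {a, c}}"
    moreover from this(4) have "\<A> = {{}, {a, b}, {b, c}, {a, c}}" using \<A>_eq by simp
    ultimately show ?thesis by blast
  qed
qed

lemma sym_diff_le_2_family_cases:
  "(\<exists>C. card C \<le> 1 \<and> C \<subseteq> \<Union>\<A> \<and> (\<forall>A\<in>\<A>. card (sym_diff A C) \<le> 1))
   \<or> (\<exists>a b. a \<noteq> b \<and> {a, b} \<subseteq> \<Union>\<A> \<and> \<A> \<subseteq> Pow {a, b})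
   \<or> (\<exists>a b c. a \<noteq> b \<and> b \<noteq> c \<and> a \<noteq> c \<and> \<A> = {{}, {a, b}, {b, c}, {a, c}})"
proof (cases "\<exists>P\<in>\<A>. card P = 2")
  case False
  have "card (sym_diff A {}) \<le> 1" if "A \<in> \<A>" for A
    using card_mem_le_2[OF that] False that by fastforce
  then show ?thesis by (intro disjI1 exI[of _ "{}"]) simp
next
  case True
  then obtain P where P: "P \<in> \<A>" "card P = 2" by blast
  show ?thesis
  proof (cases "\<exists>a. {a} \<in> \<A>")
    case True
    then obtain a where a: "{a} \<in> \<A>" by blast
    from near_singleton_or_square_if_singleton_mem[OF a P] show ?thesis
    proof (elim disjE exE conjE)
      assume "\<forall>A\<in>\<A>. card (sym_diff A {a}) \<le> 1"
      then show ?thesis using a by (intro disjI1 exI[of _ "{a}"]) auto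
    next
      fix a' assume "a' \<noteq> a" "{a'} \<in> \<A>" "\<A> \<subseteq> Pow {a, a'}"
      then show ?thesis using a by (intro disjI2 disjI1 exI[of _ a] exI[of _ a']) auto
    qed
  next
    case False
    then have "\<And>a. {a} \<notin> \<A>" by blast
    from near_singleton_or_triangle_if_no_singleton_mem[OF this P] show ?thesis
    proof (elim disjE bexE)
      fix c assume "c \<in> \<Union>\<A>" "\<forall>A\<in>\<A>. card (sym_diff A {c}) \<le> 1"
      then show ?thesis by (intro disjI1 exI[of _ "{c}"]) auto
    qed (rule disjI2, rule disjI2)
  qed
qed

end

lemma flip_empty [simp]: "flip v {} = v"
  by (simp add: flip_def)

lemma flip_flip: "flip (flip v A) B = flip v (sym_diff A B)"
  by (auto simp: flip_def fun_eq_iff)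

lemma flip_in_cube_vertices:
  assumes "v \<in> cube_vertices n" "A \<subseteq> {1..n}"
  shows "flip v A \<in> cube_vertices n"
  using assms unfolding cube_vertices_def flip_def PiE_def extensional_def by auto

lemma cube_vertex_eq_flip:
  assumes "v \<in> cube_vertices n" "w \<in> cube_vertices n"
  shows "w = flip v {i \<in> {1..n}. v i \<noteq> w i}"
  using assms by (auto simp: cube_vertices_def flip_def PiE_def extensional_def fun_eq_iff)

lemma hamming_flip_flip:
  assumes "A \<subseteq> {1..n}" "B \<subseteq> {1..n}"
  shows "hamming n (flip v A) (flip v B) = card (sym_diff A B)"
  unfolding hamming_def by (rule arg_cong[where f = card]) (use assms in \<open>auto simp: flip_def\<close>)

lemma flip_image_in_VR:
  assumes "v \<in> cube_vertices n" "finite \<A>" "\<A> \<noteq> {}" "\<A> \<subseteq> Pow {1..n}"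
    and "\<And>A B. A \<in> \<A> \<Longrightarrow> B \<in> \<A> \<Longrightarrow> card (sym_diff A B) \<le> 2"
  shows "flip v ` \<A> \<in> VR (cube_vertices n) (hamming n) 2"
  unfolding VR_def
proof (intro CollectI conjI ballI)
  fix x y assume "x \<in> flip v ` \<A>" "y \<in> flip v ` \<A>"
  then obtain A B where "A \<in> \<A>" "B \<in> \<A>" "x = flip v A" "y = flip v B" by blast
  moreover have "A \<subseteq> {1..n}" "B \<subseteq> {1..n}" using assms(4) calculation(1,2) by auto
  ultimately show "hamming n x y \<le> 2" using assms(5) by (simp add: hamming_flip_flip)
qed (use assms flip_in_cube_vertices in auto)

lemma closed_nbhd_in_VR:
  assumes "u \<in> cube_vertices n"
  shows "closed_nbhd n u \<in> VR (cube_vertices n) (hamming n) 2"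
proof -
  define \<N> where "\<N> = insert {} ((\<lambda>i. {i}) ` {1..n})"
  have "closed_nbhd n u = flip u ` \<N>"
    unfolding closed_nbhd_def \<N>_def by auto
  moreover have "flip u ` \<N> \<in> VR (cube_vertices n) (hamming n) 2"
  proof (rule flip_image_in_VR[OF assms])
    fix A B assume "A \<in> \<N>" "B \<in> \<N>"
    then show "card (sym_diff A B) \<le> 2"
      using card_sym_diff_le[of A B] unfolding \<N>_def by auto
  qed (auto simp: \<N>_def)
  ultimately show ?thesis by simp
qed

lemma square_in_VR:
  assumes "v \<in> cube_vertices n" "a \<in> {1..n}" "b \<in> {1..n}"
  shows "{v, flip v {a}, flip v {b}, flip v {a, b}} \<in> VR (cube_vertices n) (hamming n) 2"
proof -
  have "{v, flip v {a}, flip v {b}, flip v {a, b}} = flip v ` Pow {a, b}"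
    by (auto simp: Pow_insert)
  moreover have "flip v ` Pow {a, b} \<in> VR (cube_vertices n) (hamming n) 2"
  proof (rule flip_image_in_VR[OF assms(1)])
    fix A B assume "A \<in> Pow {a, b}" "B \<in> Pow {a, b}"
    then have "card (sym_diff A B) \<le> card {a, b}" by (intro card_mono) auto
    also have "\<dots> \<le> 2" by (simp add: card_insert_if)
    finally show "card (sym_diff A B) \<le> 2" .
  qed (use assms in auto)
  ultimately show ?thesis by simp
qed

lemma flip_mem_closed_nbhd:
  assumes "A \<subseteq> {1..n}" "C \<subseteq> {1..n}" "card (sym_diff A C) \<le> 1"
  shows "flip v A \<in> closed_nbhd n (flip v C)"
proof -
  have "sym_diff C (sym_diff C A) = A" by blast
  then have flip_A: "flip v A = flip (flip v C) (sym_diff C A)" by (simp add: flip_flip)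
  have "finite (sym_diff C A)" using assms(1,2) finite_subset by blast
  then consider "sym_diff C A = {}" | i where "sym_diff C A = {i}"
    using assms(3) Un_commute[of "A - C" "C - A"]
    by (metis card_1_singleton_iff card_0_eq le_Suc_eq le_zero_eq One_nat_def)
  then show ?thesis
  proof cases
    case (2 i)
    then have "i \<in> {1..n}" using assms(1,2) by blast
    with 2 show ?thesis using flip_A unfolding closed_nbhd_def by auto
  next
    case 1
    then have "A = C" by blast
    then show ?thesis by (simp add: closed_nbhd_def)
  qed
qed

lemma VR_simplex_eq_flip_image:
  assumes "\<sigma> \<in> VR (cube_vertices n) (hamming n) 2" "v \<in> \<sigma>"
  defines "\<A> \<equiv> {A. A \<subseteq> {1..n} \<and> flip v A \<in> \<sigma>}"
  shows "\<sigma> = flip v ` \<A>" "\<A> \<subseteq> Pow {1..n}" "{} \<in> \<A>"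
    and "\<And>A B. A \<in> \<A> \<Longrightarrow> B \<in> \<A> \<Longrightarrow> card (sym_diff A B) \<le> 2"
proof -
  have \<sigma>: "\<sigma> \<subseteq> cube_vertices n" "\<And>x y. x \<in> \<sigma> \<Longrightarrow> y \<in> \<sigma> \<Longrightarrow> hamming n x y \<le> 2"
    using assms(1) unfolding VR_def by auto
  have v: "v \<in> cube_vertices n" using \<sigma>(1) assms(2) by blast
  show "\<sigma> = flip v ` \<A>"
  proof
    show "\<sigma> \<subseteq> flip v ` \<A>"
    proof
      fix w assume "w \<in> \<sigma>"
      moreover have "w = flip v {i \<in> {1..n}. v i \<noteq> w i}"
        using cube_vertex_eq_flip[OF v] \<sigma>(1) \<open>w \<in> \<sigma>\<close> by blast
      ultimately show "w \<in> flip v ` \<A>" unfolding \<A>_def by auto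
    qed
  qed (auto simp: \<A>_def)
  show "\<A> \<subseteq> Pow {1..n}" "{} \<in> \<A>" using assms(2) by (auto simp: \<A>_def)
  show "card (sym_diff A B) \<le> 2" if "A \<in> \<A>" "B \<in> \<A>" for A B
    using \<sigma>(2)[of "flip v A" "flip v B"] that hamming_flip_flip[of A n B v] unfolding \<A>_def by auto
qed

lemma VR_simplex_cases:
  assumes "\<sigma> \<in> VR (cube_vertices n) (hamming n) 2"
  shows "(\<exists>u\<in>cube_vertices n. \<sigma> \<subseteq> closed_nbhd n u)
       \<or> (\<exists>v\<in>cube_vertices n. \<exists>a\<in>{1..n}. \<exists>b\<in>{1..n}. a \<noteq> b \<and>
            \<sigma> \<subseteq> {v, flip v {a}, flip v {b}, flip v {a, b}})
       \<or> (\<exists>v\<in>cube_vertices n. \<exists>a\<in>{1..n}. \<exists>b\<in>{1..n}. \<exists>c\<in>{1..n}.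
            a \<noteq> b \<and> b \<noteq> c \<and> a \<noteq> c \<and> \<sigma> = Kv v a b c)"
proof -
  obtain v where "v \<in> \<sigma>" using assms unfolding VR_def by blast
  then have v: "v \<in> cube_vertices n" using assms unfolding VR_def by blast
  define \<A> where "\<A> = {A. A \<subseteq> {1..n} \<and> flip v A \<in> \<sigma>}"
  note family = VR_simplex_eq_flip_image[OF assms \<open>v \<in> \<sigma>\<close>, folded \<A>_def]
  have \<sigma>_eq: "\<sigma> = flip v ` \<A>" and \<A>_Pow: "\<A> \<subseteq> Pow {1..n}" using family(1,2) .
  have "finite A" if "A \<in> \<A>" for A
    using that \<A>_Pow finite_subset by blast
  then have "(\<exists>C. card C \<le> 1 \<and> C \<subseteq> \<Union>\<A> \<and> (\<forall>A\<in>\<A>. card (sym_diff A C) \<le> 1))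
   \<or> (\<exists>a b. a \<noteq> b \<and> {a, b} \<subseteq> \<Union>\<A> \<and> \<A> \<subseteq> Pow {a, b})
   \<or> (\<exists>a b c. a \<noteq> b \<and> b \<noteq> c \<and> a \<noteq> c \<and> \<A> = {{}, {a, b}, {b, c}, {a, c}})"
    by (rule sym_diff_le_2_family_cases[OF family(3) _ family(4)]) simp_all
  then show ?thesis
  proof (elim disjE exE conjE)
    fix C assume C: "C \<subseteq> \<Union>\<A>" "\<forall>A\<in>\<A>. card (sym_diff A C) \<le> 1"
    have "C \<subseteq> {1..n}" using C(1) \<A>_Pow by blast
    then have "flip v C \<in> cube_vertices n" "\<sigma> \<subseteq> closed_nbhd n (flip v C)"
      using flip_in_cube_vertices[OF v] flip_mem_closed_nbhd C(2) \<A>_Pow \<sigma>_eq by auto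
    then have "\<exists>u\<in>cube_vertices n. \<sigma> \<subseteq> closed_nbhd n u" by blast
    then show ?thesis by (rule disjI1)
  next
    fix a b assume ab: "a \<noteq> b" "{a, b} \<subseteq> \<Union>\<A>" "\<A> \<subseteq> Pow {a, b}"
    have "a \<in> {1..n}" "b \<in> {1..n}" using ab(2) \<A>_Pow by blast+
    moreover have "flip v ` \<A> \<subseteq> flip v ` Pow {a, b}" using ab(3) by (rule image_mono)
    then have "\<sigma> \<subseteq> {v, flip v {a}, flip v {b}, flip v {a, b}}"
      unfolding \<sigma>_eq by (auto simp: Pow_insert)
    ultimately have "\<exists>v\<in>cube_vertices n. \<exists>a\<in>{1..n}. \<exists>b\<in>{1..n}. a \<noteq> b \<and>
            \<sigma> \<subseteq> {v, flip v {a}, flip v {b}, flip v {a, b}}"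
      using v ab(1) by blast
    then show ?thesis by (rule disjI2[OF disjI1])
  next
    fix a b c assume "a \<noteq> b" "b \<noteq> c" "a \<noteq> c" and tri: "\<A> = {{}, {a, b}, {b, c}, {a, c}}"
    moreover have "a \<in> {1..n}" "b \<in> {1..n}" "c \<in> {1..n}" using tri \<A>_Pow by auto
    moreover have "\<sigma> = Kv v a b c" unfolding \<sigma>_eq tri Kv_def by simp
    ultimately have "\<exists>v\<in>cube_vertices n. \<exists>a\<in>{1..n}. \<exists>b\<in>{1..n}. \<exists>c\<in>{1..n}.
            a \<noteq> b \<and> b \<noteq> c \<and> a \<noteq> c \<and> \<sigma> = Kv v a b c"
      using v by blast
    then show ?thesis by (rule disjI2[OF disjI2])
  qed
qed

theorem mainTheorem4:
  fixes n :: nat and \<sigma> :: "(nat \<Rightarrow> bool) set"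
  assumes "n \<ge> 3"
    and "maximal_simplex (VR (cube_vertices n) (hamming n) 2) \<sigma>"
  shows "(\<exists>v \<in> cube_vertices n. \<sigma> = closed_nbhd n v)
       \<or> (\<exists>v \<in> cube_vertices n. \<exists>i0 \<in> {1..n}. \<exists>j0 \<in> {1..n}. i0 \<noteq> j0 \<and>
            \<sigma> = {v, flip v {i0}, flip v {j0}, flip v {i0, j0}})
       \<or> (\<exists>v \<in> cube_vertices n. \<exists>i0 \<in> {1..n}. \<exists>j0 \<in> {1..n}. \<exists>k0 \<in> {1..n}.
            i0 \<noteq> j0 \<and> j0 \<noteq> k0 \<and> i0 \<noteq> k0 \<and> \<sigma> = Kv v i0 j0 k0)"
proof -
  have \<sigma>: "\<sigma> \<in> VR (cube_vertices n) (hamming n) 2"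
    and maximal: "\<And>\<tau>. \<tau> \<in> VR (cube_vertices n) (hamming n) 2 \<Longrightarrow> \<sigma> \<subseteq> \<tau> \<Longrightarrow> \<tau> = \<sigma>"
    using assms(2) unfolding maximal_simplex_def by auto
  from VR_simplex_cases[OF \<sigma>] show ?thesis
  proof (elim disjE bexE conjE)
    fix u assume u: "u \<in> cube_vertices n" and "\<sigma> \<subseteq> closed_nbhd n u"
    then have "\<sigma> = closed_nbhd n u" using maximal[OF closed_nbhd_in_VR[OF u]] by simp
    with u have "\<exists>v \<in> cube_vertices n. \<sigma> = closed_nbhd n v" by blast
    then show ?thesis by (rule disjI1)
  next
    fix v a b assume square: "v \<in> cube_vertices n" "a \<in> {1..n}" "b \<in> {1..n}" "a \<noteq> b"
      and "\<sigma> \<subseteq> {v, flip v {a}, flip v {b}, flip v {a, b}}"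
    then have "\<sigma> = {v, flip v {a}, flip v {b}, flip v {a, b}}"
      using maximal[OF square_in_VR[OF square(1-3)]] by simp
    with square have "\<exists>v \<in> cube_vertices n. \<exists>i0 \<in> {1..n}. \<exists>j0 \<in> {1..n}. i0 \<noteq> j0 \<and>
        \<sigma> = {v, flip v {i0}, flip v {j0}, flip v {i0, j0}}" by blast
    then show ?thesis by (rule disjI2[OF disjI1])
  next
    fix v a b c assume "v \<in> cube_vertices n" "a \<in> {1..n}" "b \<in> {1..n}" "c \<in> {1..n}"
      "a \<noteq> b" "b \<noteq> c" "a \<noteq> c" "\<sigma> = Kv v a b c"
    then have "\<exists>v \<in> cube_vertices n. \<exists>i0 \<in> {1..n}. \<exists>j0 \<in> {1..n}. \<exists>k0 \<in> {1..n}.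
        i0 \<noteq> j0 \<and> j0 \<noteq> k0 \<and> i0 \<noteq> k0 \<and> \<sigma> = Kv v i0 j0 k0" by blast
    then show ?thesis by (rule disjI2[OF disjI2])
  qed
qed

end
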